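(* Assume the capacities satisfy (C1) and (C3). Let $G_N$ be the Poissonian random graph and $G_N'$ a random graph satisfying (A1) and (A2), both with capacities $\{\lambda_i\}$, coupled as described below, and let $\mathcal A_N=\big\{\sum_{i=1}^N K_i\mathbf 1\{\lambda_i>c_N\}=0\big\}$ with $c_N=N^{\xi}$. For each $\xi>0$ there exists a constant $\theta>0$ such that $\mathbb P(\mathcal A_N^c)=O(N^{-\theta})$.
   Context: Capacities $\lambda_1,\dots,\lambda_N>0$ deterministic, $l_N=\sum_i\lambda_i$, $\mu_N=\frac1N\sum_i\lambda_i$, $\nu_N=\sum_i\lambda_i^2/\sum_i\lambda_i$. (C1): there are $\mu\in(0,\infty)$, $\nu\in(1,\infty)$, $\alpha_1>0$ with $|\mu_N-\mu|=O(N^{-\alpha_1})$, $|\nu_N-\nu|=O(N^{-\alpha_1})$. (C3): there is $\tau>3$ such that for every $\varepsilon>0$ (with $\gamma:=\frac1{\tau-1}+\varepsilon<\frac12$), $\limsup_N\frac1N\sum_i\lambda_i^{\tau-1-\varepsilon}<\infty$ and $\max_i\lambda_i\le N^\gamma$. Poissonian random graph: the numbers of edges between distinct nodes $i,j$ are independent Poisson variables with mean $\lambda_i\lambda_j/l_N$; its connection indicator $X_{ij}=\mathbf 1\{\text{at least one edge}\}$ has $p_{ij}=1-e^{-\lambda_i\lambda_j/l_N}$. $G_N'$: edge indicators $X'_{ij}$ independent (A1) with $p'_{ij}=\mathbb P(X'_{ij}=1)=h(\lambda_i\lambda_j/l_N)$, $h:[0,\infty)\to[0,1]$, $h(x)-x=O(x^2)$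 as $x\downarrow0$ (A2). Coupling: independently over pairs $i<j$, with $\underline p_{ij}=\min\{p_{ij},p'_{ij}\}$, $\overline p_{ij}=\max\{p_{ij},p'_{ij}\}$, let $(\hat X_{ij},\hat X'_{ij},K_{ij})$ take values $(1,1,0),(1,0,1),(0,1,1),(0,0,0)$ with probabilities $\underline p_{ij}$, $p_{ij}-\underline p_{ij}$, $\overline p_{ij}-p_{ij}$, $1-\overline p_{ij}$ respectively; $\hat X_{ij}$ and $\hat X'_{ij}$ are used as the connection indicators of $G_N$ and $G_N'$, so $K_{ij}=\mathbf 1\{\hat X_{ij}\ne\hat X'_{ij}\}$ (a mismatch), $K_{ji}=K_{ij}$, and $K_i=\sum_{j\ne i}K_{ij}$. *)

theory Defs
  imports "HOL-Probability.Probability" "HOL-Library.Landau_Symbols"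
begin

text \<open>Nodes are 0..N-1; capacities form a triangular array lam N i (i < N).\<close>

definition l_N :: "(nat \<Rightarrow> nat \<Rightarrow> real) \<Rightarrow> nat \<Rightarrow> real" where
  "l_N lam N = (\<Sum>i<N. lam N i)"

definition mu_N :: "(nat \<Rightarrow> nat \<Rightarrow> real) \<Rightarrow> nat \<Rightarrow> real" where
  "mu_N lam N = l_N lam N / real N"

definition nu_N :: "(nat \<Rightarrow> nat \<Rightarrow> real) \<Rightarrow> nat \<Rightarrow> real" where
  "nu_N lam N = (\<Sum>i<N. (lam N i)^2) / l_N lam N"

definition cond_C1 :: "(nat \<Rightarrow> nat \<Rightarrow> real) \<Rightarrow> bool" where
  "cond_C1 lam \<longleftrightarrow> (\<exists>mu nu a1. 0 < mu \<and> 1 < nu \<and> 0 < a1 \<and>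
      (\<lambda>N. \<bar>mu_N lam N - mu\<bar>) \<in> O(\<lambda>N. real N powr (-a1)) \<and>
      (\<lambda>N. \<bar>nu_N lam N - nu\<bar>) \<in> O(\<lambda>N. real N powr (-a1)))"

definition cond_C3 :: "(nat \<Rightarrow> nat \<Rightarrow> real) \<Rightarrow> bool" where
  "cond_C3 lam \<longleftrightarrow> (\<exists>tau. 3 < tau \<and> (\<forall>eps>0. 1/(tau-1) + eps < 1/2 \<longrightarrow>
      (limsup (\<lambda>N. ereal ((1/real N) * (\<Sum>i<N. lam N i powr (tau - 1 - eps)))) < \<infinity>) \<and>
      (\<forall>N\<ge>1. \<forall>i<N. lam N i \<le> real N powr (1/(tau-1) + eps))))"

definition p_pois :: "(nat \<Rightarrow> nat \<Rightarrow> real) \<Rightarrow> nat \<Rightarrow> nat \<Rightarrow> nat \<Rightarrow> real" where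
  "p_pois lam N i j = 1 - exp (- (lam N i * lam N j / l_N lam N))"

definition p_alt :: "(real \<Rightarrow> real) \<Rightarrow> (nat \<Rightarrow> nat \<Rightarrow> real) \<Rightarrow> nat \<Rightarrow> nat \<Rightarrow> nat \<Rightarrow> real" where
  "p_alt h lam N i j = h (lam N i * lam N j / l_N lam N)"

text \<open>Coupling of one pair: outcome (X, X', K) with the prescribed probabilities.\<close>
definition coupling_pmf :: "real \<Rightarrow> real \<Rightarrow> (bool \<times> bool \<times> bool) pmf" where
  "coupling_pmf p q = embed_pmf (\<lambda>w.
     if w = (True, True, False) then min p q
     else if w = (True, False, True) then p - min p q
     else if w = (False, True, True) then max p q - p
     else if w = (False, False, False) then 1 - max p q
     else 0)"

definition pairs :: "nat \<Rightarrow> (nat \<times> nat) set" where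
  "pairs N = {(i, j). i < j \<and> j < N}"

definition coupled_graphs ::
  "(real \<Rightarrow> real) \<Rightarrow> (nat \<Rightarrow> nat \<Rightarrow> real) \<Rightarrow> nat \<Rightarrow> (nat \<times> nat \<Rightarrow> bool \<times> bool \<times> bool) pmf" where
  "coupled_graphs h lam N = Pi_pmf (pairs N) (False, False, False)
      (\<lambda>(i, j). coupling_pmf (p_pois lam N i j) (p_alt h lam N i j))"

definition K_pair :: "(nat \<times> nat \<Rightarrow> bool \<times> bool \<times> bool) \<Rightarrow> nat \<Rightarrow> nat \<Rightarrow> nat" where
  "K_pair w i j = (if snd (snd (w (min i j, max i j))) then 1 else 0)"

definition K_node :: "nat \<Rightarrow> (nat \<times> nat \<Rightarrow> bool \<times> bool \<times> bool) \<Rightarrow> nat \<Rightarrow> nat" where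
  "K_node N w i = (\<Sum>j\<in>{..<N} - {i}. K_pair w i j)"

definition event_A :: "nat \<Rightarrow> real \<Rightarrow> (real \<Rightarrow> real) \<Rightarrow> (nat \<Rightarrow> nat \<Rightarrow> real)
    \<Rightarrow> (nat \<times> nat \<Rightarrow> bool \<times> bool \<times> bool) set" where
  "event_A N c h lam = {w. (\<Sum>i<N. K_node N w i * (if lam N i > c then 1 else 0)) = (0::nat)}"

end

theory Submission
  imports Defs
begin

text \<open>
  By the union bound, a mismatch at some node i with \<lambda>_i > c_N has probability at most
  the sum over such i and all j of |p_ij - p'_ij|. Both connection probabilities are
  x + O(x^2) in x = \<lambda>_i \<lambda>_j / l_N, which is uniformly small because
  max \<lambda>_i \<le> N^\<gamma> with \<gamma> < 1/2; hence
  P(A_N^c) \<le> C (\<nu>_N / l_N) \<Sum>_{\<lambda>_i > c_N} \<lambda>_i^2. A Markov-type bound with the moment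
  of order s = \<tau> - 1 - \<epsilon> > 2 from (C3) gives
  \<Sum>_{\<lambda>_i > c_N} \<lambda>_i^2 \<le> c_N^(2-s) \<Sum>_i \<lambda>_i^s = O(N c_N^(2-s)), and (C1) makes l_N of
  order N and \<nu>_N bounded, so P(A_N^c) = O(N^(-\<xi>(s-2))).
\<close>

lemma abs_one_minus_exp_minus_le:
  fixes x :: real
  assumes "0 \<le> x"
  shows "\<bar>(1 - exp (- x)) - x\<bar> \<le> x^2"
proof -
  have lower: "1 - x \<le> exp (- x)"
    using exp_ge_add_one_self[of "- x"] by simp
  have "exp (- x) \<le> 1 / (1 + x)"
    using exp_ge_add_one_self[of x] assms by (simp add: exp_minus field_simps)
  also have "\<dots> \<le> 1 - x + x^2"
    using assms by (simp add: field_simps power2_eq_square)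
  finally show ?thesis
    using lower assms by (simp add: abs_if)
qed

lemma sum_sq_above_le_powr:
  fixes f :: "'a \<Rightarrow> real"
  assumes "finite A" "0 < c" "2 \<le> s" "\<And>i. i \<in> A \<Longrightarrow> 0 \<le> f i"
  shows "(\<Sum>i | i \<in> A \<and> c < f i. (f i)^2) \<le> c powr (2 - s) * (\<Sum>i\<in>A. f i powr s)"
proof -
  have "(\<Sum>i | i \<in> A \<and> c < f i. (f i)^2) \<le> (\<Sum>i | i \<in> A \<and> c < f i. c powr (2 - s) * f i powr s)"
  proof (rule sum_mono)
    fix i assume i: "i \<in> {i. i \<in> A \<and> c < f i}"
    then have "(f i)^2 = f i powr (2 - s) * f i powr s"
      using assms(2) by (simp add: powr_add[symmetric])
    also have "\<dots> \<le> c powr (2 - s) * f i powr s"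
      using i assms(2,3) by (intro mult_right_mono powr_mono2') auto
    finally show "(f i)^2 \<le> c powr (2 - s) * f i powr s" .
  qed
  also have "\<dots> \<le> (\<Sum>i\<in>A. c powr (2 - s) * f i powr s)"
    using assms(1) by (intro sum_mono2) auto
  finally show ?thesis
    by (simp add: sum_distrib_left)
qed

lemma measure_coupling_pmf_mismatch:
  assumes "0 \<le> p" "p \<le> 1" "0 \<le> q" "q \<le> 1"
  shows "measure_pmf.prob (coupling_pmf p q) {w. snd (snd w)} = \<bar>p - q\<bar>"
proof -
  define f :: "bool \<times> bool \<times> bool \<Rightarrow> real" where "f = (\<lambda>w.
     if w = (True, True, False) then min p q
     else if w = (True, False, True) then p - min p q
     else if w = (False, True, True) then max p q - p
     else if w = (False, False, False) then 1 - max p q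
     else 0)"
  have f_nonneg: "0 \<le> f w" for w
    using assms unfolding f_def by auto
  have outcomes: "(UNIV :: (bool \<times> bool \<times> bool) set) =
      {True, False} \<times> {True, False} \<times> {True, False}"
    by auto
  have "(\<integral>\<^sup>+w. f w \<partial>count_space UNIV) = ennreal (\<Sum>w\<in>UNIV. f w)"
    using f_nonneg by (simp add: nn_integral_count_space_finite sum_ennreal)
  also have "(\<Sum>w\<in>UNIV. f w) = 1"
    unfolding outcomes by (simp add: f_def)
  finally have "pmf (embed_pmf f) w = f w" for w
    using f_nonneg by (simp add: pmf_embed_pmf)
  then have pmf_eq: "pmf (coupling_pmf p q) w = f w" for w
    by (simp add: coupling_pmf_def f_def)
  have "{w. snd (snd w)} = {True, False} \<times> {True, False} \<times> {True}"
    by auto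
  then have "measure_pmf.prob (coupling_pmf p q) {w. snd (snd w)} =
      f (True, True, True) + f (True, False, True) + f (False, True, True) + f (False, False, True)"
    by (simp add: measure_measure_pmf_finite pmf_eq)
  also have "\<dots> = \<bar>p - q\<bar>"
    by (simp add: f_def)
  finally show ?thesis .
qed

lemma finite_pairs: "finite (pairs N)"
  unfolding pairs_def by (rule finite_subset[of _ "{..<N} \<times> {..<N}"]) auto

lemma measure_Pi_pmf_coupling_mismatch:
  assumes "(a, b) \<in> pairs N" "0 \<le> P a b" "P a b \<le> 1" "0 \<le> Q a b" "Q a b \<le> 1"
  shows "measure_pmf.prob (Pi_pmf (pairs N) d (\<lambda>(i, j). coupling_pmf (P i j) (Q i j)))
           {w. snd (snd (w (a, b)))} = \<bar>P a b - Q a b\<bar>"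
proof -
  let ?G = "Pi_pmf (pairs N) d (\<lambda>(i, j). coupling_pmf (P i j) (Q i j))"
  have "measure_pmf.prob ?G {w. snd (snd (w (a, b)))} =
      measure_pmf.prob (map_pmf (\<lambda>w. w (a, b)) ?G) {x. snd (snd x)}"
    by simp
  also have "map_pmf (\<lambda>w. w (a, b)) ?G = coupling_pmf (P a b) (Q a b)"
    using assms(1) by (simp add: Pi_pmf_component[OF finite_pairs])
  finally show ?thesis
    using measure_coupling_pmf_mismatch[OF assms(2-)] by simp
qed

lemma compl_event_A_eq:
  "- event_A N c h lam =
     (\<Union>i\<in>{i. i < N \<and> c < lam N i}. \<Union>j\<in>{..<N} - {i}. {w. snd (snd (w (min i j, max i j)))})"
proof (rule set_eqI)
  fix w
  have "w \<notin> event_A N c h lam \<longleftrightarrow>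
      (\<exists>i<N. c < lam N i \<and> (\<exists>j\<in>{..<N} - {i}. snd (snd (w (min i j, max i j)))))"
    by (auto simp: event_A_def K_node_def K_pair_def)
  then show "w \<in> - event_A N c h lam \<longleftrightarrow>
      w \<in> (\<Union>i\<in>{i. i < N \<and> c < lam N i}. \<Union>j\<in>{..<N} - {i}. {w. snd (snd (w (min i j, max i j)))})"
    by simp
qed

lemma prob_compl_event_A_le:
  assumes "\<And>i j. (i, j) \<in> pairs N \<Longrightarrow> 0 \<le> P i j \<and> P i j \<le> 1 \<and> 0 \<le> Q i j \<and> Q i j \<le> 1"
  shows "measure_pmf.prob (Pi_pmf (pairs N) d (\<lambda>(i, j). coupling_pmf (P i j) (Q i j)))
           (- event_A N c h lam)
         \<le> (\<Sum>i | i < N \<and> c < lam N i. \<Sum>j\<in>{..<N} - {i}.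
               \<bar>P (min i j) (max i j) - Q (min i j) (max i j)\<bar>)"
proof -
  let ?G = "Pi_pmf (pairs N) d (\<lambda>(i, j). coupling_pmf (P i j) (Q i j))"
  let ?E = "\<lambda>i j. {w. snd (snd (w (min i j, max i j)))}"
  have "measure_pmf.prob ?G (- event_A N c h lam)
      = measure_pmf.prob ?G (\<Union>i\<in>{i. i < N \<and> c < lam N i}. \<Union>j\<in>{..<N} - {i}. ?E i j)"
    by (simp only: compl_event_A_eq)
  also have "\<dots> \<le> (\<Sum>i | i < N \<and> c < lam N i. measure_pmf.prob ?G (\<Union>j\<in>{..<N} - {i}. ?E i j))"
    by (rule measure_pmf.finite_measure_subadditive_finite) auto
  also have "\<dots> \<le> (\<Sum>i | i < N \<and> c < lam N i. \<Sum>j\<in>{..<N} - {i}. measure_pmf.prob ?G (?E i j))"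
    by (intro sum_mono measure_pmf.finite_measure_subadditive_finite) auto
  also have "\<dots> = (\<Sum>i | i < N \<and> c < lam N i. \<Sum>j\<in>{..<N} - {i}.
               \<bar>P (min i j) (max i j) - Q (min i j) (max i j)\<bar>)"
    using assms by (intro sum.cong refl measure_Pi_pmf_coupling_mismatch) (auto simp: pairs_def)
  finally show ?thesis .
qed

lemma prob_compl_event_A_le_sum_sq:
  assumes pos: "\<And>i. i < N \<Longrightarrow> 0 < lam N i"
    and h_range: "\<And>x. 0 \<le> x \<Longrightarrow> 0 \<le> h x \<and> h x \<le> 1"
    and close: "\<And>i j. i < j \<Longrightarrow> j < N \<Longrightarrow>
      \<bar>p_pois lam N i j - p_alt h lam N i j\<bar> \<le> C * (lam N i * lam N j / l_N lam N)^2"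
    and "0 \<le> C"
  shows "measure_pmf.prob (coupled_graphs h lam N) (- event_A N c h lam)
         \<le> C * nu_N lam N / l_N lam N * (\<Sum>i | i < N \<and> c < lam N i. (lam N i)^2)"
proof -
  let ?l = "l_N lam N" and ?I = "{i. i < N \<and> c < lam N i}"
  have "0 \<le> ?l"
    unfolding l_N_def using pos by (auto intro: sum_nonneg less_imp_le)
  then have probs: "0 \<le> p_pois lam N i j \<and> p_pois lam N i j \<le> 1 \<and>
      0 \<le> p_alt h lam N i j \<and> p_alt h lam N i j \<le> 1" if "(i, j) \<in> pairs N" for i j
    using that pos[of i] pos[of j] h_range[of "lam N i * lam N j / ?l"]
    by (auto simp: pairs_def p_pois_def p_alt_def)
  have "measure_pmf.prob (coupled_graphs h lam N) (- event_A N c h lam)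
      \<le> (\<Sum>i\<in>?I. \<Sum>j\<in>{..<N} - {i}.
           \<bar>p_pois lam N (min i j) (max i j) - p_alt h lam N (min i j) (max i j)\<bar>)"
    unfolding coupled_graphs_def using probs by (rule prob_compl_event_A_le)
  also have "\<dots> \<le> (\<Sum>i\<in>?I. \<Sum>j\<in>{..<N} - {i}. C / ?l^2 * ((lam N i)^2 * (lam N j)^2))"
  proof (intro sum_mono)
    fix i j assume "i \<in> ?I" "j \<in> {..<N} - {i}"
    then have "\<bar>p_pois lam N (min i j) (max i j) - p_alt h lam N (min i j) (max i j)\<bar>
        \<le> C * (lam N (min i j) * lam N (max i j) / ?l)^2"
      by (intro close) auto
    also have "\<dots> = C / ?l^2 * ((lam N i)^2 * (lam N j)^2)"
      by (cases "i \<le> j") (simp_all add: min_def max_def power_divide power_mult_distrib mult.commute)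
    finally show "\<bar>p_pois lam N (min i j) (max i j) - p_alt h lam N (min i j) (max i j)\<bar>
        \<le> C / ?l^2 * ((lam N i)^2 * (lam N j)^2)" .
  qed
  also have "\<dots> \<le> (\<Sum>i\<in>?I. \<Sum>j<N. C / ?l^2 * ((lam N i)^2 * (lam N j)^2))"
    using \<open>0 \<le> C\<close> by (intro sum_mono sum_mono2) auto
  also have "\<dots> = C / ?l^2 * ((\<Sum>i\<in>?I. (lam N i)^2) * (\<Sum>j<N. (lam N j)^2))"
    unfolding sum_product by (simp only: sum_distrib_left)
  also have "\<dots> = C * nu_N lam N / ?l * (\<Sum>i\<in>?I. (lam N i)^2)"
    by (simp add: nu_N_def power2_eq_square mult_ac)
  finally show ?thesis .
qed

lemma one_minus_exp_minus_close_to_h: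
  fixes h :: "real \<Rightarrow> real"
  assumes "(\<lambda>x. h x - x) \<in> O[at_right 0](\<lambda>x. x^2)"
  obtains C b where "0 \<le> C" "0 < b"
    and "\<And>x. 0 < x \<Longrightarrow> x < b \<Longrightarrow> \<bar>(1 - exp (- x)) - h x\<bar> \<le> C * x^2"
proof -
  obtain K where K: "0 < K" and "eventually (\<lambda>x. norm (h x - x) \<le> K * norm (x^2)) (at_right 0)"
    using assms by (elim landau_o.bigE) auto
  then obtain b where b: "0 < b" and hb: "\<And>x. 0 < x \<Longrightarrow> x < b \<Longrightarrow> \<bar>h x - x\<bar> \<le> K * x^2"
    unfolding eventually_at_right_field by auto
  have "\<bar>(1 - exp (- x)) - h x\<bar> \<le> (1 + K) * x^2" if "0 < x" "x < b" for x
  proof -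
    have "\<bar>(1 - exp (- x)) - h x\<bar> \<le> \<bar>(1 - exp (- x)) - x\<bar> + \<bar>h x - x\<bar>"
      by linarith
    also have "\<dots> \<le> x^2 + K * x^2"
      using abs_one_minus_exp_minus_le[of x] hb[OF that] that by simp
    finally show ?thesis
      by (simp add: algebra_simps)
  qed
  with K b show thesis
    by (intro that[of "1 + K" b]) auto
qed

lemma prob_compl_event_A_le_powr:
  assumes pos: "\<And>i. i < N \<Longrightarrow> 0 < lam N i"
    and h_range: "\<And>x. 0 \<le> x \<Longrightarrow> 0 \<le> h x \<and> h x \<le> 1"
    and close: "\<And>x. 0 < x \<Longrightarrow> x < b \<Longrightarrow> \<bar>(1 - exp (- x)) - h x\<bar> \<le> C * x^2" and "0 \<le> C"
    and small: "\<And>i j. i < N \<Longrightarrow> j < N \<Longrightarrow> lam N i * lam N j / l_N lam N < b"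
    and "0 < N" and m: "0 < m" "m * real N \<le> l_N lam N" and nu: "nu_N lam N \<le> V"
    and moment: "(\<Sum>i<N. lam N i powr s) \<le> B * real N" and s: "2 \<le> s"
  shows "measure_pmf.prob (coupled_graphs h lam N) (- event_A N (real N powr xi) h lam)
         \<le> C * V * B / m * real N powr (- (xi * (s - 2)))"
proof -
  let ?l = "l_N lam N" and ?c = "real N powr xi"
  have l: "0 < ?l"
    using m \<open>0 < N\<close> by (meson less_le_trans mult_pos_pos of_nat_0_less_iff)
  have pair: "\<bar>p_pois lam N i j - p_alt h lam N i j\<bar> \<le> C * (lam N i * lam N j / ?l)^2"
    if "i < j" "j < N" for i j
    unfolding p_pois_def p_alt_def using that pos[of i] pos[of j] l
    by (intro close small) auto
  have nu_nonneg: "0 \<le> nu_N lam N"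
    unfolding nu_N_def using l by (intro divide_nonneg_pos sum_nonneg) auto
  have "measure_pmf.prob (coupled_graphs h lam N) (- event_A N ?c h lam)
      \<le> C * nu_N lam N / ?l * (\<Sum>i | i < N \<and> ?c < lam N i. (lam N i)^2)"
    using pos h_range pair \<open>0 \<le> C\<close> by (rule prob_compl_event_A_le_sum_sq)
  also have "\<dots> \<le> C * V / (m * real N) * (?c powr (2 - s) * (B * real N))"
  proof (intro mult_mono)
    have "nu_N lam N / ?l \<le> V / (m * real N)"
      by (rule frac_le) (use nu nu_nonneg m \<open>0 < N\<close> in auto)
    from mult_left_mono[OF this \<open>0 \<le> C\<close>]
    show "C * nu_N lam N / ?l \<le> C * V / (m * real N)"
      by simp
    have "(\<Sum>i | i < N \<and> ?c < lam N i. (lam N i)^2) \<le> ?c powr (2 - s) * (\<Sum>i<N. lam N i powr s)"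
      using sum_sq_above_le_powr[of "{..<N}" ?c s "lam N"] pos s \<open>0 < N\<close> by (auto simp: less_imp_le)
    also have "\<dots> \<le> ?c powr (2 - s) * (B * real N)"
      using moment by (simp add: mult_left_mono)
    finally show "(\<Sum>i | i < N \<and> ?c < lam N i. (lam N i)^2) \<le> ?c powr (2 - s) * (B * real N)" .
  qed (use nu nu_nonneg m \<open>0 < N\<close> \<open>0 \<le> C\<close> in \<open>auto intro: sum_nonneg\<close>)
  also have "\<dots> = C * V * B / m * real N powr (- (xi * (s - 2)))"
    using m \<open>0 < N\<close> by (simp add: powr_powr field_simps)
  finally show ?thesis .
qed

lemma tendsto_of_bigo_powr_neg:
  fixes f :: "nat \<Rightarrow> real"
  assumes "(\<lambda>N. \<bar>f N - a\<bar>) \<in> O(\<lambda>N. real N powr -b)" "0 < b"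
  shows "f \<longlonglongrightarrow> a"
proof -
  have "(\<lambda>N. real N powr -b) \<in> o(\<lambda>_. 1)"
    by (rule smalloI_tendsto) (use assms(2) in \<open>auto intro!: tendsto_neg_powr filterlim_real_sequentially\<close>)
  with assms(1) have "(\<lambda>N. \<bar>f N - a\<bar>) \<in> o(\<lambda>_. 1)"
    by (rule landau_o.big_small_trans)
  then have "(\<lambda>N. \<bar>f N - a\<bar>) \<longlonglongrightarrow> 0"
    using smalloD_tendsto by fastforce
  then show ?thesis
    by (simp add: LIM_zero_iff tendsto_rabs_zero_iff)
qed

lemma cond_C1_eventually_bounds:
  assumes "cond_C1 lam"
  obtains m V where "0 < m"
    and "eventually (\<lambda>N. m * real N \<le> l_N lam N \<and> nu_N lam N \<le> V) sequentially"
proof -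
  obtain mu nu a where mu: "0 < mu" and a: "0 < a"
    and "(\<lambda>N. \<bar>mu_N lam N - mu\<bar>) \<in> O(\<lambda>N. real N powr -a)"
    and "(\<lambda>N. \<bar>nu_N lam N - nu\<bar>) \<in> O(\<lambda>N. real N powr -a)"
    using assms unfolding cond_C1_def by blast
  then have "mu_N lam \<longlonglongrightarrow> mu" "nu_N lam \<longlonglongrightarrow> nu"
    by (auto intro: tendsto_of_bigo_powr_neg)
  then have "eventually (\<lambda>N. mu / 2 < mu_N lam N \<and> nu_N lam N < nu + 1) sequentially"
    using mu by (intro eventually_conj order_tendstoD) auto
  then have "eventually (\<lambda>N. mu / 2 * real N \<le> l_N lam N \<and> nu_N lam N \<le> nu + 1) sequentially"
  proof eventually_elim
    case (elim N)
    then show ?case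
      by (cases "N = 0") (auto simp: mu_N_def l_N_def field_simps)
  qed
  with mu show thesis
    by (intro that[of "mu / 2"]) auto
qed

lemma cond_C3_moment_bound:
  assumes "cond_C3 lam"
  obtains s gam B where "2 < s" "gam < 1/2"
    and "eventually (\<lambda>N. (\<Sum>i<N. lam N i powr s) \<le> B * real N) sequentially"
    and "\<And>N i. 1 \<le> N \<Longrightarrow> i < N \<Longrightarrow> lam N i \<le> real N powr gam"
proof -
  obtain tau where tau: "3 < tau" and C3: "\<And>eps. eps > 0 \<Longrightarrow> 1/(tau-1) + eps < 1/2 \<Longrightarrow>
      limsup (\<lambda>N. ereal (1/real N * (\<Sum>i<N. lam N i powr (tau - 1 - eps)))) < \<infinity> \<and>
      (\<forall>N\<ge>1. \<forall>i<N. lam N i \<le> real N powr (1/(tau-1) + eps))"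
    using assms unfolding cond_C3_def by blast
  \<comment> \<open>half the gap between \<open>1/(\<tau>-1)\<close> and \<open>1/2\<close>; this also keeps \<open>\<tau> - 1 - eps > 2\<close>\<close>
  define eps where "eps = (tau - 3) / (4 * (tau - 1))"
  have "1/(tau-1) + eps = (tau + 1) / (4 * (tau - 1))"
    using tau by (simp add: eps_def divide_simps) (simp add: algebra_simps)
  also have "\<dots> < 1/2"
    using tau by (simp add: field_simps)
  finally have gam: "1/(tau-1) + eps < 1/2" .
  have "eps < (tau - 3) / 1"
    unfolding eps_def using tau by (intro divide_strict_left_mono) auto
  then have s: "2 < tau - 1 - eps"
    by simp
  have eps: "0 < eps"
    using tau by (simp add: eps_def)
  define s where "s = tau - 1 - eps"
  have "limsup (\<lambda>N. ereal (1/real N * (\<Sum>i<N. lam N i powr s))) \<noteq> \<infinity>"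
    using C3[OF eps gam] unfolding s_def by auto
  then obtain B :: nat where "limsup (\<lambda>N. ereal (1/real N * (\<Sum>i<N. lam N i powr s))) < ereal B"
    unfolding less_PInf_Ex_of_nat by blast
  then have "eventually (\<lambda>N. 1/real N * (\<Sum>i<N. lam N i powr s) < B) sequentially"
    using Limsup_lessD by fastforce
  then have moment: "eventually (\<lambda>N. (\<Sum>i<N. lam N i powr s) \<le> B * real N) sequentially"
    using eventually_gt_at_top[of 0]
    by eventually_elim (simp add: field_simps)
  have max: "\<And>N i. 1 \<le> N \<Longrightarrow> i < N \<Longrightarrow> lam N i \<le> real N powr (1/(tau-1) + eps)"
    using C3[OF eps gam] by blast
  show thesis
    using s gam moment max unfolding s_def by (rule that)
qed

lemma eventually_capacity_products_small:
  assumes pos: "\<And>N i. i < N \<Longrightarrow> 0 < lam N i"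
    and max: "\<And>N i. 1 \<le> N \<Longrightarrow> i < N \<Longrightarrow> lam N i \<le> real N powr gam" and "gam < 1/2"
    and l: "eventually (\<lambda>N. m * real N \<le> l_N lam N) sequentially" and "0 < m" "0 < b"
  shows "eventually (\<lambda>N. \<forall>i<N. \<forall>j<N. lam N i * lam N j / l_N lam N < b) sequentially"
proof -
  have "(\<lambda>N. real N powr (2 * gam - 1) / m) \<longlonglongrightarrow> 0"
    using \<open>gam < 1/2\<close>
    by (intro tendsto_divide_zero tendsto_neg_powr filterlim_real_sequentially) auto
  then have "eventually (\<lambda>N. real N powr (2 * gam - 1) / m < b) sequentially"
    using \<open>0 < b\<close> by (rule order_tendstoD)
  with l eventually_gt_at_top[of 0]
  show ?thesis
  proof eventually_elim
    case (elim N)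
    show ?case
    proof (intro allI impI)
      fix i j assume "i < N" "j < N"
      then have "lam N i * lam N j \<le> real N powr gam * real N powr gam"
        using elim pos[of i N] pos[of j N] by (intro mult_mono max) auto
      also have "\<dots> = real N powr (2 * gam)"
        by (simp add: powr_add[symmetric])
      finally have "lam N i * lam N j / l_N lam N \<le> real N powr (2 * gam) / (m * real N)"
        using elim \<open>0 < m\<close> pos[of i N] pos[of j N] \<open>i < N\<close> \<open>j < N\<close> by (intro frac_le) auto
      also have "\<dots> = real N powr (2 * gam - 1) / m"
        using elim by (simp add: powr_diff)
      finally show "lam N i * lam N j / l_N lam N < b"
        using elim by linarith
    qed
  qed
qed

theorem lemma2p1:
  fixes lam :: "nat \<Rightarrow> nat \<Rightarrow> real" and h :: "real \<Rightarrow> real" and xi :: real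
  assumes pos: "\<And>N i. i < N \<Longrightarrow> 0 < lam N i"
    and C1: "cond_C1 lam"
    and C3: "cond_C3 lam"
    and h_range: "\<And>x. 0 \<le> x \<Longrightarrow> 0 \<le> h x \<and> h x \<le> 1"
    and A2: "(\<lambda>x. h x - x) \<in> O[at_right 0](\<lambda>x. x^2)"
    and xi: "0 < xi"
  shows "\<exists>theta>0. (\<lambda>N. measure_pmf.prob (coupled_graphs h lam N)
                          (- event_A N (real N powr xi) h lam))
                    \<in> O(\<lambda>N. real N powr (-theta))"
proof -
  obtain m V where m: "0 < m"
    and C1_bounds: "eventually (\<lambda>N. m * real N \<le> l_N lam N \<and> nu_N lam N \<le> V) sequentially"
    using cond_C1_eventually_bounds[OF C1] .
  obtain s gam B where s: "2 < s" and gam: "gam < 1/2"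
    and moment: "eventually (\<lambda>N. (\<Sum>i<N. lam N i powr s) \<le> B * real N) sequentially"
    and max: "\<And>N i. 1 \<le> N \<Longrightarrow> i < N \<Longrightarrow> lam N i \<le> real N powr gam"
    using cond_C3_moment_bound[OF C3] by blast
  obtain C b where C: "0 \<le> C" and b: "0 < b"
    and close: "\<And>x. 0 < x \<Longrightarrow> x < b \<Longrightarrow> \<bar>(1 - exp (- x)) - h x\<bar> \<le> C * x^2"
    using one_minus_exp_minus_close_to_h[OF A2] by blast
  have small: "eventually (\<lambda>N. \<forall>i<N. \<forall>j<N. lam N i * lam N j / l_N lam N < b) sequentially"
    using C1_bounds by (intro eventually_capacity_products_small[OF pos max gam _ m b])
      (auto elim: eventually_mono)
  have "eventually (\<lambda>N. measure_pmf.prob (coupled_graphs h lam N) (- event_A N (real N powr xi) h lam)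
      \<le> C * V * B / m * real N powr (- (xi * (s - 2)))) sequentially"
    using C1_bounds moment small eventually_gt_at_top[of 0]
    by eventually_elim (rule prob_compl_event_A_le_powr[OF pos h_range close C], use m s in auto)
  then have "(\<lambda>N. measure_pmf.prob (coupled_graphs h lam N) (- event_A N (real N powr xi) h lam))
      \<in> O(\<lambda>N. real N powr (- (xi * (s - 2))))"
    by (intro bigoI[where c = "C * V * B / m"]) (auto elim!: eventually_mono)
  then show ?thesis
    using xi s by (intro exI[of _ "xi * (s - 2)"]) auto
qed

end
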